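(* Let $\mathcal G$ be a groupoid (standing conventions) admitting a Følner sequence $\mathcal S=(S_n)_{n\in\mathbb N}$, and let $A\subseteq\mathcal G^{(0)}$ be compact open. Then there exists $\nu\in M(\mathcal G)$ such that $\bar D^+_{\mathcal S}(A)=\nu(A)$; in particular $\bar D^+_{\mathcal S}(A)\le\sup_{\mu\in M(\mathcal G)}\mu(A)$.
   Context: Standing conventions: a groupoid is a $\sigma$-compact, locally compact, Hausdorff, étale, ample groupoid $\mathcal G$ with compact unit space $\mathcal G^{(0)}$. For $A,B\subseteq\mathcal G$, $AB$ denotes composable products and $Au=\{a\in A:s(a)=u\}$. A multisection is a finite family $\{C_{i,j}:i,j\in F\}$ of bisections with $C_{i,j}C_{j,k}=C_{i,k}$ and pairwise disjoint levels $C_{i,i}\subseteq\mathcal G^{(0)}$. A normal set is a compact open $S\subseteq\mathcal G$ together with compact open multisections $\{C^l_{i,j}:i,j\in F_l\}$, $l=1,\dots,m$, and indices $i_l\in F_l$ with $S=\bigcup_{l=1}^m\bigsqcup_{i\in F_l}C^l_{i,i_l}$ and $\mathcal G^{(0)}=\bigsqcup_{l=1}^mC^l_{i_l,i_l}$ (so $r$ is injective on each $Su$). A Følner sequence is a sequence $(S_n)$ of normal sets such that for every compact $K$, $\sup_{u\in\mathcal G^{(0)}}|KS_nu\setminus S_nu|/|S_nu|\to0$. $M(\mathcal G)$ is the set of $\mathcal G$-invariant Borel probability measures on $\mathcal G^{(0)}$. For $A\subseteq\mathcal G^{(0)}$, $\bar D^+_{\mathcal S}(A)=\limsup_{n\to\infty}\sup_{u\in\mathcal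 G^{(0)}}\frac{1}{|S_nu|}\sum_{\gamma\in S_nu}1_A(r(\gamma))$. *)

theory Defs
  imports "HOL-Analysis.Analysis" "HOL-Probability.Probability"
begin

text \<open>A topological groupoid is modelled on a whole type 'g (its arrow space), with
  range map r, source map s, (partial) multiplication mul (meaningful when s a = r b),
  inversion iv and unit space U.\<close>

definition groupoid_axioms ::
  "('g \<Rightarrow> 'g) \<Rightarrow> ('g \<Rightarrow> 'g) \<Rightarrow> ('g \<Rightarrow> 'g \<Rightarrow> 'g) \<Rightarrow> ('g \<Rightarrow> 'g) \<Rightarrow> 'g set \<Rightarrow> bool" where
  "groupoid_axioms r s mul iv U \<longleftrightarrow>
     (\<forall>g. r g \<in> U \<and> s g \<in> U) \<and>
     (\<forall>u\<in>U. r u = u \<and> s u = u) \<and>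
     (\<forall>a b. s a = r b \<longrightarrow> r (mul a b) = r a \<and> s (mul a b) = s b) \<and>
     (\<forall>a b c. s a = r b \<and> s b = r c \<longrightarrow> mul (mul a b) c = mul a (mul b c)) \<and>
     (\<forall>g. mul (r g) g = g \<and> mul g (s g) = g) \<and>
     (\<forall>g. r (iv g) = s g \<and> s (iv g) = r g) \<and>
     (\<forall>g. mul g (iv g) = r g \<and> mul (iv g) g = s g)"

definition bisection :: "('g \<Rightarrow> 'g) \<Rightarrow> ('g \<Rightarrow> 'g) \<Rightarrow> 'g set \<Rightarrow> bool" where
  "bisection r s B \<longleftrightarrow> inj_on r B \<and> inj_on s B"

definition local_homeo :: "('g::topological_space \<Rightarrow> 'g) \<Rightarrow> bool" where
  "local_homeo f \<longleftrightarrow> (\<forall>g. \<exists>V. open V \<and> g \<in> V \<and> open (f ` V) \<and>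
      (\<exists>h. homeomorphism V (f ` V) f h))"

text \<open>Standing conventions: sigma-compact, locally compact, Hausdorff, etale, ample,
  with compact unit space.\<close>
definition ample_groupoid ::
  "('g::t2_space \<Rightarrow> 'g) \<Rightarrow> ('g \<Rightarrow> 'g) \<Rightarrow> ('g \<Rightarrow> 'g \<Rightarrow> 'g) \<Rightarrow> ('g \<Rightarrow> 'g) \<Rightarrow> 'g set \<Rightarrow> bool" where
  "ample_groupoid r s mul iv U \<longleftrightarrow>
     groupoid_axioms r s mul iv U \<and>
     continuous_on UNIV r \<and> continuous_on UNIV s \<and> continuous_on UNIV iv \<and>
     continuous_on {(a, b). s a = r b} (\<lambda>(a, b). mul a b) \<and>
     (\<exists>F::nat \<Rightarrow> 'g set. (\<forall>n. compact (F n)) \<and> (\<Union>n. F n) = UNIV) \<and>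
     locally_compact_space (euclidean :: 'g topology) \<and>
     local_homeo r \<and> local_homeo s \<and>
     (\<forall>W g. open W \<and> g \<in> W \<longrightarrow>
        (\<exists>B. compact B \<and> open B \<and> bisection r s B \<and> g \<in> B \<and> B \<subseteq> W)) \<and>
     compact U"

definition setmul :: "('g \<Rightarrow> 'g) \<Rightarrow> ('g \<Rightarrow> 'g) \<Rightarrow> ('g \<Rightarrow> 'g \<Rightarrow> 'g) \<Rightarrow> 'g set \<Rightarrow> 'g set \<Rightarrow> 'g set" where
  "setmul r s mul A B = {mul a b | a b. a \<in> A \<and> b \<in> B \<and> s a = r b}"

definition fibre :: "('g \<Rightarrow> 'g) \<Rightarrow> 'g set \<Rightarrow> 'g \<Rightarrow> 'g set" where
  "fibre s A u = {a \<in> A. s a = u}"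

definition compact_open_multisection ::
  "('g::topological_space \<Rightarrow> 'g) \<Rightarrow> ('g \<Rightarrow> 'g) \<Rightarrow> ('g \<Rightarrow> 'g \<Rightarrow> 'g) \<Rightarrow> 'g set \<Rightarrow>
   nat set \<Rightarrow> (nat \<Rightarrow> nat \<Rightarrow> 'g set) \<Rightarrow> bool" where
  "compact_open_multisection r s mul U F C \<longleftrightarrow>
     finite F \<and>
     (\<forall>i\<in>F. \<forall>j\<in>F. compact (C i j) \<and> open (C i j) \<and> bisection r s (C i j)) \<and>
     (\<forall>i\<in>F. \<forall>j\<in>F. \<forall>k\<in>F. setmul r s mul (C i j) (C j k) = C i k) \<and>
     (\<forall>i\<in>F. C i i \<subseteq> U) \<and>
     (\<forall>i\<in>F. \<forall>j\<in>F. i \<noteq> j \<longrightarrow> C i i \<inter> C j j = {})"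

definition normal_set ::
  "('g::topological_space \<Rightarrow> 'g) \<Rightarrow> ('g \<Rightarrow> 'g) \<Rightarrow> ('g \<Rightarrow> 'g \<Rightarrow> 'g) \<Rightarrow> 'g set \<Rightarrow> 'g set \<Rightarrow> bool" where
  "normal_set r s mul U S \<longleftrightarrow> compact S \<and> open S \<and>
     (\<exists>(m::nat) (F::nat \<Rightarrow> nat set) (C::nat \<Rightarrow> nat \<Rightarrow> nat \<Rightarrow> 'g set) (i0::nat \<Rightarrow> nat).
        (\<forall>l<m. compact_open_multisection r s mul U (F l) (C l) \<and> i0 l \<in> F l) \<and>
        S = (\<Union>l<m. \<Union>i\<in>F l. C l i (i0 l)) \<and>
        (\<forall>l<m. \<forall>i\<in>F l. \<forall>i'\<in>F l. i \<noteq> i' \<longrightarrow> C l i (i0 l) \<inter> C l i' (i0 l) = {}) \<and>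
        U = (\<Union>l<m. C l (i0 l) (i0 l)) \<and>
        (\<forall>l<m. \<forall>l'<m. l \<noteq> l' \<longrightarrow> C l (i0 l) (i0 l) \<inter> C l' (i0 l') (i0 l') = {}))"

text \<open>Foelner sequence: sup over units of |K S_n u \ S_n u| / |S_n u| tends to 0 for every
  compact K (supremum taken in ereal so it is well defined).\<close>
definition foelner_seq ::
  "('g::topological_space \<Rightarrow> 'g) \<Rightarrow> ('g \<Rightarrow> 'g) \<Rightarrow> ('g \<Rightarrow> 'g \<Rightarrow> 'g) \<Rightarrow> 'g set \<Rightarrow> (nat \<Rightarrow> 'g set) \<Rightarrow> bool" where
  "foelner_seq r s mul U S \<longleftrightarrow> (\<forall>n. normal_set r s mul U (S n)) \<and>
     (\<forall>K. compact K \<longrightarrow>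
        ((\<lambda>n. SUP u\<in>U. ereal (real (card (setmul r s mul K (fibre s (S n) u) - fibre s (S n) u))
                        / real (card (fibre s (S n) u)))) \<longlonglongrightarrow> 0))"

definition invariant_measures ::
  "('g::topological_space \<Rightarrow> 'g) \<Rightarrow> ('g \<Rightarrow> 'g) \<Rightarrow> 'g set \<Rightarrow> 'g measure set" where
  "invariant_measures r s U = {\<nu>. prob_space \<nu> \<and> sets \<nu> = sets (restrict_space borel U) \<and>
     (\<forall>B. open B \<and> bisection r s B \<longrightarrow> emeasure \<nu> (s ` B) = emeasure \<nu> (r ` B))}"

definition upper_density ::
  "('g \<Rightarrow> 'g) \<Rightarrow> ('g \<Rightarrow> 'g) \<Rightarrow> 'g set \<Rightarrow> (nat \<Rightarrow> 'g set) \<Rightarrow> 'g set \<Rightarrow> ereal" where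
  "upper_density r s U S A = limsup (\<lambda>n. SUP u\<in>U.
      ereal ((1 / real (card (fibre s (S n) u))) * (\<Sum>\<gamma>\<in>fibre s (S n) u. indicator A (r \<gamma>))))"

end

theory Submission
  imports Defs
begin

(* Pick fibres F_k of the Foelner sets along which the proportion of arrows with range in A
   tends to the upper density. By Tychonoff, the functionals X \<mapsto> |{\<gamma> \<in> F_k. r \<gamma> \<in> X}| / |F_k|
   have a pointwise cluster point mu, a finitely additive mean on the unit space. Left
   multiplication by a compact open bisection K moves F_k only by |K F_k - F_k|, a vanishing
   proportion, so mu (s K) = mu (r K). Measuring open sets from inside by compact open sets and
   applying Caratheodory's construction turns mu into an invariant Borel probability measure
   that agrees with mu on compact open sets, in particular on A. *)

section \<open>Cluster points of bounded families of functions\<close>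

lemma compact_funspace:
  fixes K :: "'b::topological_space set"
  assumes "compact K"
  shows "compact {f :: 'a \<Rightarrow> 'b. \<forall>x. f x \<in> K}"
proof -
  have "compactin (product_topology (\<lambda>_. euclidean) UNIV) (PiE UNIV (\<lambda>_::'a. K))"
    using assms by (simp add: compactin_PiE)
  moreover have "PiE UNIV (\<lambda>_::'a. K) = {f. \<forall>x. f x \<in> K}" by (auto simp: PiE_def Pi_def)
  ultimately show ?thesis by (metis compactin_euclidean_iff euclidean_product_topology)
qed

lemma closed_mem_of_cluster_point:
  assumes "closed P" "eventually (\<lambda>y. y \<in> P) F" "inf (nhds x) F \<noteq> bot"
  shows "x \<in> P"
proof (rule ccontr)
  assume "x \<notin> P"
  then have "eventually (\<lambda>y. y \<notin> P) (nhds x)"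
    using assms(1) eventually_nhds_in_open[of "- P" x] by (simp add: open_Compl)
  then have "eventually (\<lambda>_. False) (inf (nhds x) F)"
    using assms(2) unfolding eventually_inf by blast
  with assms(3) show False by (simp add: trivial_limit_def)
qed

lemma pointwise_cluster_point:
  fixes d :: "'i \<Rightarrow> 'a \<Rightarrow> 'b::topological_space"
  assumes "F \<noteq> bot" "compact K" "\<And>i x. d i x \<in> K"
  obtains f where "\<And>x. f x \<in> K"
    "\<And>P. closed P \<Longrightarrow> eventually (\<lambda>i. d i \<in> P) F \<Longrightarrow> f \<in> P"
proof -
  have "filtermap d F \<noteq> bot" "eventually (\<lambda>f. f \<in> {f. \<forall>x. f x \<in> K}) (filtermap d F)"
    using assms by (simp_all add: filtermap_bot_iff eventually_filtermap)
  then obtain f where "f \<in> {f. \<forall>x. f x \<in> K}" "inf (nhds f) (filtermap d F) \<noteq> bot"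
    using compact_funspace[OF assms(2)] unfolding compact_filter by blast
  then show ?thesis
    using that closed_mem_of_cluster_point[of _ "filtermap d F" f] by (auto simp: eventually_filtermap)
qed

lemma limsup_SUP_realised:
  fixes f :: "nat \<Rightarrow> 'a \<Rightarrow> real"
  assumes "I \<noteq> {}" "\<And>n i. i \<in> I \<Longrightarrow> f n i \<in> {a..b}"
  obtains \<rho> i D where "strict_mono \<rho>" "\<And>k. i k \<in> I"
    "limsup (\<lambda>n. SUP i\<in>I. ereal (f n i)) = ereal D" "(\<lambda>k. f (\<rho> k) (i k)) \<longlonglongrightarrow> D"
proof -
  define w where "w n = (SUP i\<in>I. f n i)" for n
  have bdd: "bdd_above (f n ` I)" for n
    using assms(2) by (intro bdd_aboveI) auto
  have SUP_eq: "(SUP i\<in>I. ereal (f n i)) = ereal (w n)" and w_ab: "w n \<in> {a..b}" for n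
  proof -
    have "ereal a \<le> (SUP i\<in>I. ereal (f n i))" "(SUP i\<in>I. ereal (f n i)) \<le> ereal b"
      using assms by (auto intro: SUP_upper2 SUP_least)
    moreover from this show "(SUP i\<in>I. ereal (f n i)) = ereal (w n)"
      unfolding w_def by (intro ereal_SUP[symmetric]) auto
    ultimately show "w n \<in> {a..b}" by simp
  qed
  obtain \<rho> where \<rho>: "strict_mono \<rho>" "((\<lambda>n. ereal (w n)) \<circ> \<rho>) \<longlonglongrightarrow> limsup (\<lambda>n. ereal (w n))"
    using limsup_subseq_lim by blast
  have "limsup (\<lambda>n. ereal (w n)) \<in> {ereal a..ereal b}"
    using w_ab by (auto intro: LIMSEQ_le_const[OF \<rho>(2)] LIMSEQ_le_const2[OF \<rho>(2)])
  then obtain D where D: "limsup (\<lambda>n. ereal (w n)) = ereal D"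
    by (cases "limsup (\<lambda>n. ereal (w n))") auto
  then have w_lim: "(\<lambda>k. w (\<rho> k)) \<longlonglongrightarrow> D"
    using \<rho>(2) by (simp add: o_def)
  have "\<exists>j\<in>I. w (\<rho> k) - inverse (real (Suc k)) < f (\<rho> k) j" for k
  proof -
    have "w (\<rho> k) - inverse (real (Suc k)) < (SUP j\<in>I. f (\<rho> k) j)"
      unfolding w_def[symmetric] by simp
    then show ?thesis by (simp only: less_cSUP_iff[OF assms(1) bdd])
  qed
  then obtain i where i: "\<And>k. i k \<in> I" "\<And>k. w (\<rho> k) - inverse (real (Suc k)) < f (\<rho> k) (i k)"
    by metis
  have "(\<lambda>k. f (\<rho> k) (i k)) \<longlonglongrightarrow> D"
  proof (rule tendsto_sandwich)
    show "\<forall>\<^sub>F k in sequentially. w (\<rho> k) - inverse (real (Suc k)) \<le> f (\<rho> k) (i k)"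
      using i(2) by (simp add: less_imp_le)
    show "\<forall>\<^sub>F k in sequentially. f (\<rho> k) (i k) \<le> w (\<rho> k)"
      using i(1) bdd unfolding w_def by (simp add: cSUP_upper)
    show "(\<lambda>k. w (\<rho> k) - inverse (real (Suc k))) \<longlonglongrightarrow> D"
      using tendsto_diff[OF w_lim LIMSEQ_inverse_real_of_nat] by simp
  qed (rule w_lim)
  with D show ?thesis
    by (intro that[OF \<rho>(1) i(1)]) (simp_all add: SUP_eq)
qed

section \<open>Groupoids\<close>

locale groupoid =
  fixes r s iv :: "'g \<Rightarrow> 'g" and mul :: "'g \<Rightarrow> 'g \<Rightarrow> 'g" and U :: "'g set"
  assumes groupoid: "groupoid_axioms r s mul iv U"
begin

lemma r_in_U [simp]: "r g \<in> U" and s_in_U [simp]: "s g \<in> U"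
  using groupoid by (auto simp: groupoid_axioms_def)

lemma r_unit: "u \<in> U \<Longrightarrow> r u = u" and s_unit: "u \<in> U \<Longrightarrow> s u = u"
  using groupoid by (auto simp: groupoid_axioms_def)

lemma r_mul: "s a = r b \<Longrightarrow> r (mul a b) = r a"
  using groupoid by (auto simp: groupoid_axioms_def)

lemma mul_assoc: "s a = r b \<Longrightarrow> s b = r c \<Longrightarrow> mul (mul a b) c = mul a (mul b c)"
  using groupoid unfolding groupoid_axioms_def by blast

lemma mul_r_left: "mul (r g) g = g" and mul_s_right: "mul g (s g) = g"
  using groupoid by (auto simp: groupoid_axioms_def)

lemma r_iv [simp]: "r (iv g) = s g" and s_iv [simp]: "s (iv g) = r g"
  using groupoid by (auto simp: groupoid_axioms_def)

lemma mul_iv_left: "mul (iv g) g = s g"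
  using groupoid by (auto simp: groupoid_axioms_def)

lemma iv_iv [simp]: "iv (iv g) = g"
proof -
  have "g = mul (mul (iv (iv g)) (iv g)) g" by (simp add: mul_iv_left mul_r_left)
  also have "\<dots> = mul (iv (iv g)) (mul (iv g) g)" by (rule mul_assoc) simp_all
  also have "\<dots> = iv (iv g)" using mul_s_right[of "iv (iv g)"] by (simp add: mul_iv_left)
  finally show ?thesis by simp
qed

lemma mul_iv_cancel_left: "s b = r c \<Longrightarrow> mul (iv b) (mul b c) = c"
  by (simp add: mul_assoc[symmetric] mul_iv_left mul_r_left)

lemma range_r: "range r = U"
  by (auto simp: image_iff) (metis r_unit)

lemma iv_image_eq_vimage: "iv ` B = iv -` B"
  by (auto simp: image_iff) (metis iv_iv)

lemma r_image_iv: "r ` iv ` B = s ` B" and s_image_iv: "s ` iv ` B = r ` B"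
  by (auto simp: image_image)

lemma bisection_iv_image: "bisection r s B \<Longrightarrow> bisection r s (iv ` B)"
  unfolding bisection_def inj_on_def by auto

end

lemma local_homeo_open_image:
  assumes "local_homeo f" "open W"
  shows "open (f ` W)"
proof -
  have "\<exists>T. open T \<and> f x \<in> T \<and> T \<subseteq> f ` W" if "x \<in> W" for x
  proof -
    obtain V h where V: "open V" "x \<in> V" "open (f ` V)" "homeomorphism V (f ` V) f h"
      using assms(1) unfolding local_homeo_def by blast
    then have h: "continuous_on (f ` V) h" "\<And>y. y \<in> V \<Longrightarrow> h (f y) = y"
      by (auto simp: homeomorphism_def)
    define T where "T = f ` V \<inter> h -` (V \<inter> W)"
    have "\<forall>B. open B \<longrightarrow> open (f ` V \<inter> h -` B)"
      using h(1) by (simp add: continuous_on_open_vimage[OF V(3)] Int_commute)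
    then have "open T"
      using V(1) assms(2) unfolding T_def by blast
    moreover have "f x \<in> T" "T \<subseteq> f ` W"
      using that V(2) h(2) by (auto simp: T_def)
    ultimately show ?thesis by blast
  qed
  then show ?thesis by (subst open_subopen) blast
qed

locale ample_groupoid_ctx = groupoid r s iv mul U
  for r s iv :: "'g::t2_space \<Rightarrow> 'g" and mul and U +
  assumes ample: "ample_groupoid r s mul iv U"
begin

lemma continuous_r: "continuous_on X r" and continuous_s: "continuous_on X s"
  and continuous_iv: "continuous_on X iv"
  using ample by (auto simp: ample_groupoid_def intro: continuous_on_subset)

lemma compact_U: "compact U"
  using ample by (simp add: ample_groupoid_def)

lemma open_r_image: "open W \<Longrightarrow> open (r ` W)" and open_s_image: "open W \<Longrightarrow> open (s ` W)"
  using ample local_homeo_open_image by (auto simp: ample_groupoid_def)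

lemma open_U: "open U"
  using open_r_image[of UNIV] by (simp add: range_r)

lemma open_iv_image: "open B \<Longrightarrow> open (iv ` B)"
  unfolding iv_image_eq_vimage using continuous_iv[of UNIV] by (simp add: continuous_on_open_vimage)

lemma compact_iv_image: "compact B \<Longrightarrow> compact (iv ` B)"
  by (rule compact_continuous_image[OF continuous_iv])

lemma compact_open_bisection_basis:
  "open W \<Longrightarrow> g \<in> W \<Longrightarrow> \<exists>B. compact B \<and> open B \<and> bisection r s B \<and> g \<in> B \<and> B \<subseteq> W"
  using ample unfolding ample_groupoid_def by blast

lemma compact_open_between:
  fixes K :: "'g set"
  assumes "compact K" "open W" "K \<subseteq> W"
  obtains C where "compact C" "open C" "K \<subseteq> C" "C \<subseteq> W"
proof -
  have "\<exists>B. compact B \<and> open B \<and> x \<in> B \<and> B \<subseteq> W" if "x \<in> K" for x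
    using compact_open_bisection_basis[OF assms(2)] that assms(3) by blast
  then obtain B where B: "\<And>x. x \<in> K \<Longrightarrow> compact (B x) \<and> open (B x) \<and> x \<in> B x \<and> B x \<subseteq> W"
    by metis
  then obtain D where D: "D \<subseteq> K" "finite D" "K \<subseteq> (\<Union>x\<in>D. B x)"
    using compactE_image[OF assms(1), of K B] by force
  show ?thesis
    by (rule that[of "\<Union>x\<in>D. B x"]) (use B D in \<open>auto intro!: compact_UN open_UN\<close>)
qed

text \<open>A bisection is mapped homeomorphically onto its image by s, so the part of B lying over
  a compact C \<subseteq> s ` B is compact.\<close>
lemma compact_bisection_Int_vimage_s:
  assumes B: "open B" "bisection r s B" and C: "compact C" "C \<subseteq> s ` B"
  shows "compact (B \<inter> s -` C)"
proof -
  define g where "g = the_inv_into B s"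
  have "inj_on s B" using B(2) by (simp add: bisection_def)
  then have gs: "\<And>x. x \<in> B \<Longrightarrow> g (s x) = x" unfolding g_def by (rule the_inv_into_f_f)
  have "continuous_on (s ` B) g"
  proof (rule continuous_on_inverse_open_map[OF continuous_s refl gs])
    fix V assume "openin (top_of_set B) V"
    then have "open V" "V \<subseteq> B" using B(1) openin_open_trans openin_imp_subset by blast+
    then show "openin (top_of_set (s ` B)) (s ` V)"
      using open_s_image by (metis image_mono inf.absorb_iff2 openin_open_Int)
  qed
  then have "compact (g ` C)"
    using C by (metis compact_continuous_image continuous_on_subset)
  moreover have "B \<inter> s -` C = g ` C"
  proof
    show "g ` C \<subseteq> B \<inter> s -` C" using C(2) gs by auto
    show "B \<inter> s -` C \<subseteq> g ` C" using gs by (metis IntE image_eqI subsetI vimageE)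
  qed
  ultimately show ?thesis by simp
qed

end

section \<open>Frequencies of ranges in finite sets of arrows\<close>

context groupoid
begin

definition frequency :: "'g set \<Rightarrow> 'g set \<Rightarrow> real" where
  "frequency F X = 1 / real (card F) * (\<Sum>\<gamma>\<in>F. indicator X (r \<gamma>))"

lemma frequency_eq_card:
  "finite F \<Longrightarrow> frequency F X = real (card {\<gamma>\<in>F. r \<gamma> \<in> X}) / real (card F)"
  unfolding frequency_def by (simp add: indicator_def sum.If_cases Int_def)

lemma frequency_bounds:
  assumes "finite F" "F \<noteq> {}"
  shows "frequency F X \<in> {0..1}"
  using card_mono[OF assms(1), of "{\<gamma>\<in>F. r \<gamma> \<in> X}"] assms
  by (simp add: frequency_eq_card card_gt_0_iff)

lemma frequency_U:
  assumes "finite F" "F \<noteq> {}"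
  shows "frequency F U = 1"
  using assms by (simp add: frequency_eq_card card_gt_0_iff)

lemma frequency_Un:
  "X \<inter> Y = {} \<Longrightarrow> frequency F (X \<union> Y) = frequency F X + frequency F Y"
  unfolding frequency_def by (simp add: indicator_disj_union sum.distrib distrib_left)

lemma finite_setmul:
  assumes "bisection r s K" "finite F"
  shows "finite (setmul r s mul K F)"
proof -
  have "setmul r s mul K F \<subseteq> (\<lambda>(a, b). mul a b) ` (\<Union>b\<in>F. (s -` {r b} \<inter> K) \<times> {b})"
    by (auto simp: setmul_def)
  moreover have "finite (\<Union>b\<in>F. (s -` {r b} \<inter> K) \<times> {b})"
    using assms by (auto simp: bisection_def intro!: finite_vimage_IntI)
  ultimately show ?thesis by (meson finite_imageI finite_subset)
qed

text \<open>Left multiplication by the arrow of K with source r \<gamma> injects the arrows of F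
  ranging in s ` K into K F; those landing back in F range in r ` K.\<close>
lemma card_range_in_s_image_le:
  assumes K: "bisection r s K" and F: "finite F"
  shows "card {\<gamma>\<in>F. r \<gamma> \<in> s ` K}
    \<le> card {\<gamma>\<in>F. r \<gamma> \<in> r ` K} + card (setmul r s mul K F - F)"
proof -
  define G where "G = {\<gamma>\<in>F. r \<gamma> \<in> s ` K}"
  have "\<forall>\<gamma>\<in>G. \<exists>c. c \<in> K \<and> s c = r \<gamma>" by (auto simp: G_def)
  then obtain b where b: "\<And>\<gamma>. \<gamma> \<in> G \<Longrightarrow> b \<gamma> \<in> K \<and> s (b \<gamma>) = r \<gamma>"
    by metis
  define \<phi> where "\<phi> \<gamma> = mul (b \<gamma>) \<gamma>" for \<gamma>
  have "inj_on \<phi> G"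
  proof (rule inj_onI)
    fix x y assume xy: "x \<in> G" "y \<in> G" "\<phi> x = \<phi> y"
    have "r (b x) = r (b y)"
      using xy r_mul[of "b x" x] r_mul[of "b y" y] b by (simp add: \<phi>_def)
    then have "b x = b y"
      using K b xy unfolding bisection_def by (meson inj_onD)
    have "x = mul (iv (b x)) (\<phi> x)"
      using b[OF xy(1)] by (simp add: \<phi>_def mul_iv_cancel_left)
    also have "\<dots> = mul (iv (b y)) (\<phi> y)"
      using \<open>b x = b y\<close> xy(3) by simp
    also have "\<dots> = y"
      using b[OF xy(2)] by (simp add: \<phi>_def mul_iv_cancel_left)
    finally show "x = y" .
  qed
  then have "card G = card (\<phi> ` G \<inter> F) + card (\<phi> ` G - F)"
    using F by (simp add: card_image[symmetric] card_Int_Diff G_def)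
  also have "\<dots> \<le> card {\<gamma>\<in>F. r \<gamma> \<in> r ` K} + card (setmul r s mul K F - F)"
    using b r_mul finite_setmul[OF K F] F
    by (intro add_mono card_mono) (auto simp: \<phi>_def setmul_def G_def)
  finally show ?thesis unfolding G_def .
qed

lemma frequency_s_image_le:
  assumes "bisection r s K" "finite F"
  shows "frequency F (s ` K)
    \<le> frequency F (r ` K) + real (card (setmul r s mul K F - F)) / real (card F)"
  using card_range_in_s_image_le[OF assms] assms(2)
  by (simp add: frequency_eq_card add_divide_distrib[symmetric] divide_right_mono)

end

context ample_groupoid_ctx
begin

lemma normal_set_fibre:
  assumes "normal_set r s mul U S" "u \<in> U"
  shows "finite (fibre s S u)" "fibre s S u \<noteq> {}"
proof -
  obtain m :: nat and F :: "nat \<Rightarrow> nat set" and C :: "nat \<Rightarrow> nat \<Rightarrow> nat \<Rightarrow> 'g set"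
    and i0 :: "nat \<Rightarrow> nat" where
    C: "\<forall>l<m. compact_open_multisection r s mul U (F l) (C l) \<and> i0 l \<in> F l"
    and S: "S = (\<Union>l<m. \<Union>i\<in>F l. C l i (i0 l))"
    and U: "U = (\<Union>l<m. C l (i0 l) (i0 l))"
    using assms(1) unfolding normal_set_def by blast
  from assms(2) U obtain l where "l < m" "u \<in> C l (i0 l) (i0 l)" by auto
  then have "u \<in> fibre s S u" using C S s_unit[OF assms(2)] by (auto simp: fibre_def)
  then show "fibre s S u \<noteq> {}" by blast
  have "finite (s -` {u} \<inter> C l i (i0 l))" if "l < m" "i \<in> F l" for l i
    using C that unfolding compact_open_multisection_def bisection_def
    by (intro finite_vimage_IntI) auto
  moreover have "finite (F l)" if "l < m" for l
    using C that by (simp add: compact_open_multisection_def)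
  ultimately have "finite (\<Union>l<m. \<Union>i\<in>F l. s -` {u} \<inter> C l i (i0 l))"
    by (intro finite_UN_I) auto
  moreover have "fibre s S u = (\<Union>l<m. \<Union>i\<in>F l. s -` {u} \<inter> C l i (i0 l))"
    unfolding S fibre_def by auto
  ultimately show "finite (fibre s S u)" by (simp only:)
qed

lemma foelner_ratio_eventually_less:
  assumes "foelner_seq r s mul U S" "compact K" "0 < e"
  shows "\<forall>\<^sub>F n in sequentially. \<forall>u\<in>U.
    real (card (setmul r s mul K (fibre s (S n) u) - fibre s (S n) u)) / real (card (fibre s (S n) u)) < e"
proof -
  define R where "R n u = real (card (setmul r s mul K (fibre s (S n) u) - fibre s (S n) u))
    / real (card (fibre s (S n) u))" for n u
  have "(\<lambda>n. SUP u\<in>U. ereal (R n u)) \<longlonglongrightarrow> 0"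
    using assms(1,2) unfolding foelner_seq_def R_def by blast
  then have "\<forall>\<^sub>F n in sequentially. (SUP u\<in>U. ereal (R n u)) < ereal e"
    using assms(3) by (intro order_tendstoD(2)) auto
  then show ?thesis
  proof eventually_elim
    case (elim n)
    have "ereal (R n u) < ereal e" if "u \<in> U" for u
      using SUP_upper[OF that, of "\<lambda>u. ereal (R n u)"] elim by (rule le_less_trans)
    then show ?case unfolding R_def by simp
  qed
qed

lemma foelner_frequency_s_image_eventually_le:
  assumes "foelner_seq r s mul U S" "strict_mono \<rho>" "\<And>k. u k \<in> U"
    and "compact K" "bisection r s K" "0 < e"
  shows "\<forall>\<^sub>F k in sequentially. frequency (fibre s (S (\<rho> k)) (u k)) (s ` K)
    \<le> frequency (fibre s (S (\<rho> k)) (u k)) (r ` K) + e"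
  using eventually_subseq[OF assms(2) foelner_ratio_eventually_less[OF assms(1,4,6)]]
proof eventually_elim
  case (elim k)
  define F where "F = fibre s (S (\<rho> k)) (u k)"
  have "finite F"
    using assms(1,3) normal_set_fibre by (simp add: foelner_seq_def F_def)
  moreover have "real (card (setmul r s mul K F - F)) / real (card F) < e"
    using elim assms(3) by (simp add: F_def)
  ultimately show ?case
    using frequency_s_image_le[OF assms(5)] by (fold F_def) (meson add_left_mono less_imp_le order_trans)
qed

end

section \<open>From invariant means to invariant measures\<close>

locale finitely_additive_mean = ample_groupoid_ctx r s iv mul U
  for r s iv :: "'g::t2_space \<Rightarrow> 'g" and mul and U +
  fixes mu :: "'g set \<Rightarrow> real"
  assumes mu_nonneg: "0 \<le> mu X" and mu_U: "mu U = 1"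
    and mu_Un: "X \<inter> Y = {} \<Longrightarrow> mu (X \<union> Y) = mu X + mu Y"

locale invariant_mean = finitely_additive_mean +
  assumes mu_invariant: "compact B \<Longrightarrow> open B \<Longrightarrow> bisection r s B \<Longrightarrow> mu (s ` B) = mu (r ` B)"

definition compact_open_subsets :: "'a::topological_space set \<Rightarrow> 'a set set" where
  "compact_open_subsets W = {C. compact C \<and> open C \<and> C \<subseteq> W}"

lemma empty_in_compact_open_subsets [simp]: "{} \<in> compact_open_subsets W"
  by (simp add: compact_open_subsets_def)

context finitely_additive_mean
begin

lemma mu_empty: "mu {} = 0"
  using mu_Un[of "{}" "{}"] by simp

lemma mu_mono: "X \<subseteq> Y \<Longrightarrow> mu X \<le> mu Y"
  using mu_Un[of X "Y - X"] mu_nonneg[of "Y - X"] by (simp add: Un_absorb1)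

lemma mu_subadditive: "mu (X \<union> Y) \<le> mu X + mu Y"
  using mu_Un[of X "Y - X"] mu_mono[of "Y - X" Y] by simp

text \<open>As in the Riesz representation theorem, open sets are measured from inside by compact
  open sets and arbitrary sets from outside by open sets.\<close>

definition inner_mu :: "'g set \<Rightarrow> ennreal" where
  "inner_mu W = (SUP C\<in>compact_open_subsets W. ennreal (mu C))"

definition outer_mu :: "'g set \<Rightarrow> ennreal" where
  "outer_mu X = (INF W\<in>{W. open W \<and> X \<subseteq> W \<and> W \<subseteq> U}. inner_mu W)"

lemma inner_mu_upper: "compact C \<Longrightarrow> open C \<Longrightarrow> C \<subseteq> W \<Longrightarrow> ennreal (mu C) \<le> inner_mu W"
  unfolding inner_mu_def by (rule SUP_upper) (simp add: compact_open_subsets_def)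

lemma inner_mu_mono: "W \<subseteq> W' \<Longrightarrow> inner_mu W \<le> inner_mu W'"
  unfolding inner_mu_def by (rule SUP_subset_mono) (auto simp: compact_open_subsets_def)

lemma inner_mu_compact_open:
  assumes "compact C" "open C"
  shows "inner_mu C = ennreal (mu C)"
proof (rule antisym)
  show "inner_mu C \<le> ennreal (mu C)"
    unfolding inner_mu_def by (rule SUP_least) (auto simp: compact_open_subsets_def intro!: ennreal_leI mu_mono)
  show "ennreal (mu C) \<le> inner_mu C"
    using assms by (rule inner_mu_upper) simp
qed

lemma inner_mu_le_1: "W \<subseteq> U \<Longrightarrow> inner_mu W \<le> 1"
  using inner_mu_mono[of W U] inner_mu_compact_open[OF compact_U open_U] mu_U by simp

lemma inner_mu_empty: "inner_mu {} = 0"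
  using inner_mu_compact_open[of "{}"] mu_empty by simp

lemma inner_mu_add_Diff_le:
  assumes "compact C" "open C" "C \<subseteq> W"
  shows "ennreal (mu C) + inner_mu (W - C) \<le> inner_mu W"
proof -
  have "ennreal (mu C) + inner_mu (W - C)
      = (SUP D\<in>compact_open_subsets (W - C). ennreal (mu C) + ennreal (mu D))"
    unfolding inner_mu_def by (rule ennreal_SUP_add_right) (metis empty_in_compact_open_subsets empty_iff)
  also have "\<dots> \<le> inner_mu W"
  proof (rule SUP_least)
    fix D assume D: "D \<in> compact_open_subsets (W - C)"
    then have "C \<inter> D = {}" by (auto simp: compact_open_subsets_def)
    then have "ennreal (mu C) + ennreal (mu D) = ennreal (mu (C \<union> D))"
      using mu_nonneg by (simp add: mu_Un ennreal_plus)
    also have "\<dots> \<le> inner_mu W"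
      using D assms by (intro inner_mu_upper) (auto simp: compact_open_subsets_def)
    finally show "ennreal (mu C) + ennreal (mu D) \<le> inner_mu W" .
  qed
  finally show ?thesis .
qed

text \<open>A compact open subset of W \<union> W' splits into compact open pieces inside W and
  inside W', by enclosing the compact set C - W' in a compact open subset of W.\<close>
lemma inner_mu_Un_le:
  assumes "open W" "open W'"
  shows "inner_mu (W \<union> W') \<le> inner_mu W + inner_mu W'"
  unfolding inner_mu_def[of "W \<union> W'"]
proof (rule SUP_least)
  fix C assume "C \<in> compact_open_subsets (W \<union> W')"
  then have C: "compact C" "open C" "C \<subseteq> W \<union> W'" by (auto simp: compact_open_subsets_def)
  have "compact (C - W')" using C(1) assms(2) by (simp add: compact_diff)
  then obtain C1 where C1: "compact C1" "open C1" "C - W' \<subseteq> C1" "C1 \<subseteq> W"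
    using compact_open_between[OF _ assms(1)] C(3) by blast
  have C2: "compact (C - C1)" "open (C - C1)" "C - C1 \<subseteq> W'"
    using C C1 by (auto simp: compact_diff open_Diff compact_imp_closed)
  have "mu C \<le> mu C1 + mu (C - C1)"
    using mu_mono[of C "C1 \<union> (C - C1)"] mu_subadditive[of C1 "C - C1"] by auto
  then have "ennreal (mu C) \<le> ennreal (mu C1) + ennreal (mu (C - C1))"
    by (simp add: mu_nonneg flip: ennreal_plus)
  also have "\<dots> \<le> inner_mu W + inner_mu W'"
    using C1 C2 by (intro add_mono inner_mu_upper) auto
  finally show "ennreal (mu C) \<le> inner_mu W + inner_mu W'" .
qed

lemma inner_mu_finite_UN_le:
  assumes "finite I" "\<And>i. i \<in> I \<Longrightarrow> open (W i)"
  shows "inner_mu (\<Union>i\<in>I. W i) \<le> (\<Sum>i\<in>I. inner_mu (W i))"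
  using assms
proof (induction I rule: finite_induct)
  case empty
  then show ?case by (simp add: inner_mu_empty)
next
  case (insert i I)
  then have "inner_mu (\<Union>j\<in>insert i I. W j) \<le> inner_mu (W i) + inner_mu (\<Union>j\<in>I. W j)"
    by (simp add: inner_mu_Un_le open_UN)
  also have "\<dots> \<le> (\<Sum>j\<in>insert i I. inner_mu (W j))"
    using insert by (simp add: add_left_mono)
  finally show ?case .
qed

lemma inner_mu_countable_UN_le:
  assumes "\<And>i. open (W i)"
  shows "inner_mu (\<Union>i. W i) \<le> (\<Sum>i. inner_mu (W i))"
  unfolding inner_mu_def[of "\<Union>i. W i"]
proof (rule SUP_least)
  fix C assume "C \<in> compact_open_subsets (\<Union>i. W i)"
  then have C: "compact C" "open C" "C \<subseteq> (\<Union>i. W i)" by (auto simp: compact_open_subsets_def)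
  obtain I where I: "finite I" "C \<subseteq> (\<Union>i\<in>I. W i)"
    using compactE_image[OF C(1), of UNIV W] assms C(3) by auto
  have "ennreal (mu C) \<le> inner_mu (\<Union>i\<in>I. W i)"
    using C I by (intro inner_mu_upper) (auto simp: assms)
  also have "\<dots> \<le> (\<Sum>i\<in>I. inner_mu (W i))"
    using I assms by (intro inner_mu_finite_UN_le)
  also have "\<dots> \<le> (\<Sum>i. inner_mu (W i))"
    using I(1) by (intro sum_le_suminf) auto
  finally show "ennreal (mu C) \<le> (\<Sum>i. inner_mu (W i))" .
qed

lemma outer_mu_le_inner_mu: "X \<subseteq> W \<Longrightarrow> open W \<Longrightarrow> W \<subseteq> U \<Longrightarrow> outer_mu X \<le> inner_mu W"
  unfolding outer_mu_def by (rule INF_lower) auto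

lemma outer_mu_open: "open W \<Longrightarrow> W \<subseteq> U \<Longrightarrow> outer_mu W = inner_mu W"
  by (rule antisym, rule outer_mu_le_inner_mu)
    (auto simp: outer_mu_def intro!: INF_greatest inner_mu_mono)

lemma outer_mu_mono: "X \<subseteq> Y \<Longrightarrow> outer_mu X \<le> outer_mu Y"
  unfolding outer_mu_def by (rule INF_superset_mono) auto

lemma outer_mu_empty: "outer_mu {} = 0"
  using outer_mu_open[of "{}"] inner_mu_empty by simp

lemma outer_mu_le_1: "X \<subseteq> U \<Longrightarrow> outer_mu X \<le> 1"
  using outer_mu_le_inner_mu[of X U] open_U inner_mu_le_1[of U] by simp

lemma outer_mu_countably_subadditive:
  assumes A: "\<And>i. A i \<subseteq> U"
  shows "outer_mu (\<Union>i. A i) \<le> (\<Sum>i. outer_mu (A i))"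
proof (rule ennreal_le_epsilon)
  fix e :: real assume "0 < e"
  define d where "d i = e * (1/2) ^ Suc i" for i
  have d_pos: "0 < d i" for i using \<open>0 < e\<close> by (simp add: d_def)
  have "\<exists>W. open W \<and> A i \<subseteq> W \<and> W \<subseteq> U \<and> inner_mu W < outer_mu (A i) + ennreal (d i)" for i
  proof -
    have "outer_mu (A i) < \<top>"
      using outer_mu_le_1[OF A, of i] ennreal_one_less_top by (rule le_less_trans)
    then have "outer_mu (A i) < outer_mu (A i) + ennreal (d i)"
      using d_pos[of i] by simp
    then show ?thesis unfolding outer_mu_def[of "A i"] INF_less_iff by auto
  qed
  then obtain W where W: "\<And>i. open (W i) \<and> A i \<subseteq> W i \<and> W i \<subseteq> U
      \<and> inner_mu (W i) < outer_mu (A i) + ennreal (d i)"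
    by metis
  have "(\<Sum>i. ennreal (d i)) = ennreal e"
  proof -
    have "d sums (e * 1)" unfolding d_def by (intro sums_mult power_half_series)
    then show ?thesis using d_pos by (subst suminf_ennreal2) (auto simp: sums_iff less_imp_le)
  qed
  have "outer_mu (\<Union>i. A i) \<le> inner_mu (\<Union>i. W i)"
    using W by (intro outer_mu_le_inner_mu) auto
  also have "\<dots> \<le> (\<Sum>i. inner_mu (W i))"
    using W by (intro inner_mu_countable_UN_le) auto
  also have "\<dots> \<le> (\<Sum>i. outer_mu (A i) + ennreal (d i))"
    using W by (intro suminf_le) (auto intro: less_imp_le)
  also have "\<dots> = (\<Sum>i. outer_mu (A i)) + ennreal e"
    using \<open>(\<Sum>i. ennreal (d i)) = ennreal e\<close> by (subst suminf_add[symmetric]) auto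
  finally show "outer_mu (\<Union>i. A i) \<le> (\<Sum>i. outer_mu (A i)) + ennreal e" .
qed

lemma outer_measure_space_outer_mu: "outer_measure_space (Pow U) outer_mu"
  unfolding outer_measure_space_def positive_def increasing_def countably_subadditive_def
  by (auto simp: outer_mu_empty outer_mu_mono intro!: outer_mu_countably_subadditive)

lemma outer_mu_Int_Diff_open:
  assumes "open W0" "W0 \<subseteq> U" "X \<subseteq> U"
  shows "outer_mu (X \<inter> W0) + outer_mu (X - W0) = outer_mu X"
proof (rule antisym)
  show "outer_mu (X \<inter> W0) + outer_mu (X - W0) \<le> outer_mu X"
    unfolding outer_mu_def[of X]
  proof (rule INF_greatest)
    fix W assume "W \<in> {W. open W \<and> X \<subseteq> W \<and> W \<subseteq> U}"
    then have W: "open W" "X \<subseteq> W" "W \<subseteq> U" by auto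
    have "inner_mu (W \<inter> W0) + outer_mu (X - W0)
        = (SUP C\<in>compact_open_subsets (W \<inter> W0). ennreal (mu C) + outer_mu (X - W0))"
      unfolding inner_mu_def
      by (rule ennreal_SUP_add_left[symmetric]) (metis empty_in_compact_open_subsets empty_iff)
    also have "\<dots> \<le> inner_mu W"
    proof (rule SUP_least)
      fix C assume "C \<in> compact_open_subsets (W \<inter> W0)"
      then have C: "compact C" "open C" "C \<subseteq> W \<inter> W0" by (auto simp: compact_open_subsets_def)
      have "outer_mu (X - W0) \<le> inner_mu (W - C)"
        using C W by (intro outer_mu_le_inner_mu) (auto simp: open_Diff compact_imp_closed)
      then have "ennreal (mu C) + outer_mu (X - W0) \<le> ennreal (mu C) + inner_mu (W - C)"
        by (rule add_left_mono)
      also have "\<dots> \<le> inner_mu W" using C by (intro inner_mu_add_Diff_le) auto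
      finally show "ennreal (mu C) + outer_mu (X - W0) \<le> inner_mu W" .
    qed
    finally have "inner_mu (W \<inter> W0) + outer_mu (X - W0) \<le> inner_mu W" .
    moreover have "outer_mu (X \<inter> W0) \<le> inner_mu (W \<inter> W0)"
      using W assms by (intro outer_mu_le_inner_mu) auto
    ultimately show "outer_mu (X \<inter> W0) + outer_mu (X - W0) \<le> inner_mu W"
      by (meson add_right_mono order_trans)
  qed
  interpret P: sigma_algebra U "Pow U" by (rule sigma_algebra_Pow)
  have "subadditive (Pow U) outer_mu"
    using outer_measure_space_outer_mu unfolding outer_measure_space_def
    by (intro P.countably_subadditive_subadditive) auto
  then have "outer_mu ((X \<inter> W0) \<union> (X - W0)) \<le> outer_mu (X \<inter> W0) + outer_mu (X - W0)"
    by (rule subadditiveD) (use assms(3) in auto)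
  then show "outer_mu X \<le> outer_mu (X \<inter> W0) + outer_mu (X - W0)"
    by (simp add: Int_Diff_Un)
qed

definition mean_measure :: "'g measure" where
  "mean_measure = measure_of U (sets (restrict_space borel U)) outer_mu"

lemma sets_restrict_borel_U_subset_lambda_system:
  "sets (restrict_space borel U) \<subseteq> lambda_system U (Pow U) outer_mu"
proof -
  interpret L: sigma_algebra U "lambda_system U (Pow U) outer_mu"
    using sigma_algebra.caratheodory_lemma[OF sigma_algebra_Pow outer_measure_space_outer_mu]
    by (simp add: measure_space_def)
  have "B \<inter> U \<in> lambda_system U (Pow U) outer_mu" if "B \<in> sigma_sets UNIV {S. open S}" for B
    using that
  proof induction
    case (Basic W)
    then show ?case
      using open_U outer_mu_Int_Diff_open[of "W \<inter> U"]
      by (auto simp: algebra.lambda_system_eq[OF algebra_Pow] Int_commute)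
  next
    case (Compl B)
    then show ?case by (simp add: Diff_Int_distrib2 L.compl_sets)
  next
    case (Union B)
    have "(\<Union>i. B i) \<inter> U = (\<Union>i. B i \<inter> U)" by blast
    show ?case
      unfolding \<open>(\<Union>i. B i) \<inter> U = (\<Union>i. B i \<inter> U)\<close> using Union by (intro L.countable_UN) auto
  qed simp
  then show ?thesis
    by (auto simp: sets_restrict_space sets_borel Int_commute)
qed

lemma space_mean_measure [simp]: "space mean_measure = U"
  and sets_mean_measure: "sets mean_measure = sets (restrict_space borel U)"
  using sets.sigma_algebra_axioms[of "restrict_space borel U"]
  by (simp_all add: mean_measure_def space_restrict_space sigma_algebra.sets_measure_of_eq
      space_measure_of_conv sets.sets_into_space)

lemma emeasure_mean_measure:
  assumes "X \<in> sets (restrict_space borel U)"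
  shows "emeasure mean_measure X = outer_mu X"
  unfolding mean_measure_def
proof (rule emeasure_measure_of_sigma[OF _ _ _ assms])
  show "sigma_algebra U (sets (restrict_space borel U))"
    using sets.sigma_algebra_axioms[of "restrict_space borel U"] by (simp add: space_restrict_space)
  show "positive (sets (restrict_space borel U)) outer_mu" by (simp add: positive_def outer_mu_empty)
  have "countably_additive (lambda_system U (Pow U) outer_mu) outer_mu"
    using sigma_algebra.caratheodory_lemma[OF sigma_algebra_Pow outer_measure_space_outer_mu]
    by (simp add: measure_space_def)
  then show "countably_additive (sets (restrict_space borel U)) outer_mu"
    using sets_restrict_borel_U_subset_lambda_system unfolding countably_additive_def by blast
qed

lemma emeasure_mean_measure_open:
  assumes "open W" "W \<subseteq> U"
  shows "emeasure mean_measure W = inner_mu W"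
proof -
  have "W \<in> sets (restrict_space borel U)"
    using assms by (auto simp: sets_restrict_space intro!: image_eqI[of _ _ W])
  then show ?thesis using assms by (simp add: emeasure_mean_measure outer_mu_open)
qed

lemma measure_mean_measure_compact_open:
  "compact C \<Longrightarrow> open C \<Longrightarrow> C \<subseteq> U \<Longrightarrow> measure mean_measure C = mu C"
  by (simp add: measure_def emeasure_mean_measure_open inner_mu_compact_open mu_nonneg)

lemma prob_space_mean_measure: "prob_space mean_measure"
  by (rule prob_spaceI)
    (simp add: emeasure_mean_measure_open[OF open_U] inner_mu_compact_open[OF compact_U open_U] mu_U)

end

context invariant_mean
begin

lemma inner_mu_s_image_le:
  assumes "open B" "bisection r s B"
  shows "inner_mu (s ` B) \<le> inner_mu (r ` B)"
  unfolding inner_mu_def[of "s ` B"]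
proof (rule SUP_least)
  fix C assume "C \<in> compact_open_subsets (s ` B)"
  then have C: "compact C" "open C" "C \<subseteq> s ` B" by (auto simp: compact_open_subsets_def)
  define B' where "B' = B \<inter> s -` C"
  have B': "compact B'" "open B'" "bisection r s B'" "s ` B' = C"
    using compact_bisection_Int_vimage_s[OF assms C(1,3)] assms C continuous_s[of UNIV]
    unfolding B'_def bisection_def
    by (auto simp: continuous_on_open_vimage intro: inj_on_subset)
  then have "ennreal (mu C) = ennreal (mu (r ` B'))"
    using mu_invariant by metis
  also have "\<dots> \<le> inner_mu (r ` B)"
    using B' by (intro inner_mu_upper compact_continuous_image[OF continuous_r] open_r_image)
      (auto simp: B'_def)
  finally show "ennreal (mu C) \<le> inner_mu (r ` B)" .
qed

lemma mean_measure_invariant: "mean_measure \<in> invariant_measures r s U"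
  unfolding invariant_measures_def
proof (intro CollectI conjI allI impI)
  fix B assume B: "open B \<and> bisection r s B"
  have "inner_mu (s ` B) = inner_mu (r ` B)"
    using inner_mu_s_image_le[of B] inner_mu_s_image_le[of "iv ` B"] B
    by (simp add: antisym open_iv_image bisection_iv_image r_image_iv s_image_iv)
  then show "emeasure mean_measure (s ` B) = emeasure mean_measure (r ` B)"
    using B by (simp add: emeasure_mean_measure_open open_s_image open_r_image image_subsetI)
qed (simp_all add: prob_space_mean_measure sets_mean_measure)

end

context ample_groupoid_ctx
begin

lemma invariant_mean_from_foelner_fibres:
  assumes foelner: "foelner_seq r s mul U S" and \<rho>: "strict_mono \<rho>" and u: "\<And>k. u k \<in> U"
    and lim: "(\<lambda>k. frequency (fibre s (S (\<rho> k)) (u k)) A) \<longlonglongrightarrow> D"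
  shows "\<exists>mu. invariant_mean r s iv mul U mu \<and> mu A = D"
proof -
  define F where "F k = fibre s (S (\<rho> k)) (u k)" for k
  have F: "finite (F k)" "F k \<noteq> {}" for k
    using normal_set_fibre foelner u unfolding F_def foelner_seq_def by auto
  \<comment> \<open>a cluster point in the product topology of the function space: closed conditions
    that eventually hold for the frequencies pass to it\<close>
  obtain mu where mu_01: "\<And>X. mu X \<in> {0..1}"
    and mu_closed: "\<And>P. closed P \<Longrightarrow> \<forall>\<^sub>F k in sequentially. frequency (F k) \<in> P \<Longrightarrow> mu \<in> P"
    using pointwise_cluster_point[of sequentially "{0..1}" "\<lambda>k. frequency (F k)"]
      frequency_bounds[OF F] by auto
  have mu_U: "mu U = 1"
    using mu_closed[of "{f. f U = 1}"] frequency_U[OF F]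
    by (simp add: closed_Collect_eq continuous_on_const)
  have mu_Un: "mu (X \<union> Y) = mu X + mu Y" if "X \<inter> Y = {}" for X Y
    using mu_closed[of "{f. f (X \<union> Y) = f X + f Y}"] frequency_Un[OF that]
    by (simp add: closed_Collect_eq continuous_on_add)
  have half_invariant: "mu (s ` B) \<le> mu (r ` B)" if "compact B" "bisection r s B" for B
  proof (rule field_le_epsilon)
    fix e :: real assume "0 < e"
    then show "mu (s ` B) \<le> mu (r ` B) + e"
      using mu_closed[of "{f. f (s ` B) \<le> f (r ` B) + e}"] that
        foelner_frequency_s_image_eventually_le[OF foelner \<rho> u]
      by (simp add: F_def closed_Collect_le continuous_on_add continuous_on_const)
  qed
  have mu_invariant: "mu (s ` B) = mu (r ` B)" if "compact B" "bisection r s B" for B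
    using half_invariant[OF that]
      half_invariant[OF compact_iv_image[OF that(1)] bisection_iv_image[OF that(2)]]
    by (simp add: r_image_iv s_image_iv)
  have "dist (mu A) D \<le> 0 + e" if "0 < e" for e
  proof -
    have "\<forall>\<^sub>F k in sequentially. dist (frequency (F k) A) D \<le> e"
      using tendstoD[OF lim \<open>0 < e\<close>] unfolding F_def by eventually_elim simp
    then show ?thesis
      using mu_closed[of "{f. dist (f A) D \<le> e}"]
      by (simp add: closed_Collect_le continuous_on_dist continuous_on_const)
  qed
  then have "mu A = D"
    by (metis dist_le_zero_iff field_le_epsilon)
  moreover have "invariant_mean r s iv mul U mu"
    by unfold_locales (use mu_01 mu_U mu_Un mu_invariant in auto)
  ultimately show ?thesis by blast
qed

end

theorem mainTheorem13:
  fixes r s iv :: "'g::t2_space \<Rightarrow> 'g" and mul :: "'g \<Rightarrow> 'g \<Rightarrow> 'g"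
    and U :: "'g set" and S :: "nat \<Rightarrow> 'g set" and A :: "'g set"
  assumes "ample_groupoid r s mul iv U"
    and "foelner_seq r s mul U S"
    and "A \<subseteq> U" and "compact A" and "open A"
  shows "\<exists>\<nu>\<in>invariant_measures r s U. upper_density r s U S A = ereal (measure \<nu> A)
           \<and> upper_density r s U S A \<le> (SUP \<mu>\<in>invariant_measures r s U. ereal (measure \<mu> A))"
proof -
  interpret ample_groupoid_ctx r s iv mul U
    using assms(1) by unfold_locales (simp_all add: ample_groupoid_def)
  have "U \<noteq> {}" using r_in_U by blast
  moreover have "frequency (fibre s (S n) u) A \<in> {0..1}" if "u \<in> U" for n u
    using assms(2) that by (intro frequency_bounds normal_set_fibre) (auto simp: foelner_seq_def)
  ultimately obtain \<rho> u D where \<rho>: "strict_mono \<rho>" "\<And>k. u k \<in> U"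
    and D: "limsup (\<lambda>n. SUP u\<in>U. ereal (frequency (fibre s (S n) u) A)) = ereal D"
    and lim: "(\<lambda>k. frequency (fibre s (S (\<rho> k)) (u k)) A) \<longlonglongrightarrow> D"
    by (rule limsup_SUP_realised[where f = "\<lambda>n u. frequency (fibre s (S n) u) A"]) auto
  obtain mu where mean: "invariant_mean r s iv mul U mu" and "mu A = D"
    using invariant_mean_from_foelner_fibres[OF assms(2) \<rho> lim] by blast
  interpret invariant_mean r s iv mul U mu by (rule mean)
  have density: "upper_density r s U S A = ereal (measure mean_measure A)"
    using D \<open>mu A = D\<close> assms(3-5)
    by (simp add: upper_density_def frequency_def measure_mean_measure_compact_open)
  show ?thesis
  proof (rule bexI[OF _ mean_measure_invariant], intro conjI density)
    show "upper_density r s U S A \<le> (SUP \<mu>\<in>invariant_measures r s U. ereal (measure \<mu> A))"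
      unfolding density by (rule SUP_upper[OF mean_measure_invariant])
  qed
qed

end
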